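(* Let $X,Y$ be real Hilbert spaces and $a:X\times Y\to\mathbb{R}\cup\{+\infty\}$ such that for every $y\in Y$ the function $a(\cdot,y)$ is proper and $\Phi_{lsc}$-convex on $X$, and for every $x\in X$ the function $a(x,\cdot)$ is concave on $Y$. If $\sup_{y\in Y}\inf_{x\in X}a(x,y)=\inf_{x\in X}\sup_{y\in Y}a(x,y)$, then for every $\alpha<\inf_{x\in X}\sup_{y\in Y}a(x,y)$ there exist $y_1,y_2\in Y$ such that for every $\varepsilon>0$ there exist $x_1\in\mathrm{dom}\,a(\cdot,y_1)$ and $x_2\in\mathrm{dom}\,a(\cdot,y_2)$ for which $a(\cdot,y_1)$ and $a(\cdot,y_2)$ satisfy $ZS(\varepsilon,x_1,x_2)$.
   Context: $\Phi_{lsc}$ is the class of functions $\varphi(x)=-a\|x\|^2+\langle v,x\rangle+c$ ($a\ge0$, $v\in X^*$, $c\in\mathbb{R}$); $\mathrm{supp}(f)=\{\varphi\in\Phi_{lsc}:\varphi\le f\}$; $f$ is $\Phi_{lsc}$-convex if $f=\sup\mathrm{supp}(f)$ pointwise; proper means $\mathrm{supp}(f)\ne\emptyset$ and $\mathrm{dom}(f)\ne\emptyset$. For $\varepsilon\ge0$, $\partial^\varepsilon_{lsc}f(\bar x)$ is the set of $(a,v)\in\mathbb{R}_+\times X^*$ with $f(x)-f(\bar x)\ge\langle v,x-\bar x\rangle-a\|x\|^2+a\|\bar x\|^2-\varepsilon$ for all $x\in X$. Functions $f,g$ satisfy $ZS(\varepsilon,x_1,x_2)$ if $0=(0,0)\in\mathrm{co}(\partial^\varepsilon_{lsc}f(x_1)\cup\partial^\varepsilon_{lsc}g(x_2))$,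 convex hull in $\mathbb{R}\times X^*$. *)

theory Defs
  imports "HOL-Analysis.Analysis"
begin

definition Phi_lsc :: "('a::real_normed_vector \<Rightarrow> real) set" where
  "Phi_lsc = {\<phi>. \<exists>a::real. \<exists>v::'a \<Rightarrow>\<^sub>L real. \<exists>c::real.
      a \<ge> 0 \<and> \<phi> = (\<lambda>x. - a * (norm x)\<^sup>2 + blinfun_apply v x + c)}"

definition supp_lsc :: "('a::real_normed_vector \<Rightarrow> ereal) \<Rightarrow> ('a \<Rightarrow> real) set" where
  "supp_lsc f = {\<phi> \<in> Phi_lsc. \<forall>x. ereal (\<phi> x) \<le> f x}"

definition edom :: "('a \<Rightarrow> ereal) \<Rightarrow> 'a set" where
  "edom f = {x. f x < \<infinity>}"

definition Phi_lsc_convex :: "('a::real_normed_vector \<Rightarrow> ereal) \<Rightarrow> bool" where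
  "Phi_lsc_convex f \<longleftrightarrow> (\<forall>x. f x = (SUP \<phi>\<in>supp_lsc f. ereal (\<phi> x)))"

definition proper_lsc :: "('a::real_normed_vector \<Rightarrow> ereal) \<Rightarrow> bool" where
  "proper_lsc f \<longleftrightarrow> supp_lsc f \<noteq> {} \<and> edom f \<noteq> {}"

definition concave_ereal :: "('b::real_vector \<Rightarrow> ereal) \<Rightarrow> bool" where
  "concave_ereal g \<longleftrightarrow> (\<forall>y1 y2 t. 0 \<le> t \<and> t \<le> 1 \<longrightarrow>
      ereal t * g y1 + ereal (1 - t) * g y2 \<le> g (t *\<^sub>R y1 + (1 - t) *\<^sub>R y2))"

definition subdiff_lsc :: "real \<Rightarrow> ('a::real_normed_vector \<Rightarrow> ereal) \<Rightarrow> 'a \<Rightarrow> (real \<times> ('a \<Rightarrow>\<^sub>L real)) set" where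
  "subdiff_lsc \<epsilon> f xb = {(a, v). a \<ge> 0 \<and> (\<forall>x. f x - f xb \<ge>
      ereal (blinfun_apply v (x - xb) - a * (norm x)\<^sup>2 + a * (norm xb)\<^sup>2 - \<epsilon>))}"

definition ZS :: "real \<Rightarrow> ('a::real_normed_vector \<Rightarrow> ereal) \<Rightarrow> ('a \<Rightarrow> ereal) \<Rightarrow> 'a \<Rightarrow> 'a \<Rightarrow> bool" where
  "ZS \<epsilon> f g x1 x2 \<longleftrightarrow> (0::real \<times> ('a \<Rightarrow>\<^sub>L real)) \<in> convex hull (subdiff_lsc \<epsilon> f x1 \<union> subdiff_lsc \<epsilon> g x2)"

end

theory Submission
  imports Defs
begin

text \<open>By the minimax equality some \<open>y\<^sub>0\<close> has \<open>inf\<^sub>x a(x, y\<^sub>0) > \<alpha>\<close>, so this infimum is finite.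
  An \<open>\<epsilon>\<close>-minimizer \<open>x\<^sub>0\<close> of \<open>a(\<cdot>, y\<^sub>0)\<close> then has \<open>(0, 0)\<close> in its \<open>\<epsilon>\<close>-subdifferential,
  and \<open>ZS\<close> holds with \<open>y\<^sub>1 = y\<^sub>2 = y\<^sub>0\<close> and \<open>x\<^sub>1 = x\<^sub>2 = x\<^sub>0\<close>.\<close>

lemma zero_in_subdiff_lsc_if_eps_minimal:
  fixes f :: "'a::real_normed_vector \<Rightarrow> ereal"
  assumes finite: "f x0 = ereal r" and eps_min: "\<And>x. f x0 \<le> f x + ereal \<epsilon>"
  shows "(0, 0) \<in> subdiff_lsc \<epsilon> f x0"
proof -
  have "f x - f x0 \<ge> ereal (- \<epsilon>)" for x
    using eps_min[of x] finite by (cases "f x") auto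
  then show ?thesis
    unfolding subdiff_lsc_def by simp
qed

lemma exists_eps_minimizer:
  fixes f :: "'a::real_normed_vector \<Rightarrow> ereal"
  assumes bounded_below: "(INF x. f x) \<noteq> -\<infinity>" and dom: "edom f \<noteq> {}" and "\<epsilon> > 0"
  obtains x0 r where "f x0 = ereal r" and "\<And>x. f x0 \<le> f x + ereal \<epsilon>"
proof -
  obtain z where "f z < \<infinity>"
    using dom unfolding edom_def by auto
  moreover have "(INF x. f x) \<le> f z"
    by (rule INF_lower) simp
  ultimately obtain m where m: "(INF x. f x) = ereal m"
    using bounded_below by (cases "(INF x. f x)") auto
  then have lower: "ereal m \<le> f x" for x
    by (metis INF_lower UNIV_I)
  have "(INF x. f x) < ereal (m + \<epsilon>)"
    using m \<open>\<epsilon> > 0\<close> by simp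
  then obtain x0 where x0: "f x0 < ereal (m + \<epsilon>)"
    by (auto simp: INF_less_iff)
  with lower[of x0] obtain r where r: "f x0 = ereal r"
    by (cases "f x0") auto
  have "f x0 \<le> f x + ereal \<epsilon>" for x
    using lower[of x] x0 r by (cases "f x") auto
  with r show thesis
    using that by blast
qed

lemma ZS_if_zero_in_subdiff_lsc:
  assumes "(0, 0) \<in> subdiff_lsc \<epsilon> f x1"
  shows "ZS \<epsilon> f g x1 x2"
  using assms unfolding ZS_def by (simp add: hull_inc zero_prod_def)

theorem mainTheorem15:
  fixes a :: "'a::{real_inner, complete_space} \<Rightarrow> 'b::{real_inner, complete_space} \<Rightarrow> ereal"
  assumes no_minf: "\<forall>x y. a x y \<noteq> -\<infinity>"
    and proper: "\<forall>y. proper_lsc (\<lambda>x. a x y)"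
    and convex: "\<forall>y. Phi_lsc_convex (\<lambda>x. a x y)"
    and concave: "\<forall>x. concave_ereal (\<lambda>y. a x y)"
    and minimax: "(SUP y. INF x. a x y) = (INF x. SUP y. a x y)"
  shows "\<forall>\<alpha>::real. ereal \<alpha> < (INF x. SUP y. a x y) \<longrightarrow>
           (\<exists>y1 y2. \<forall>\<epsilon>>0. \<exists>x1 x2. x1 \<in> edom (\<lambda>x. a x y1) \<and> x2 \<in> edom (\<lambda>x. a x y2) \<and>
               ZS \<epsilon> (\<lambda>x. a x y1) (\<lambda>x. a x y2) x1 x2)"
proof (intro allI impI)
  fix \<alpha> :: real
  assume "ereal \<alpha> < (INF x. SUP y. a x y)"
  then have "ereal \<alpha> < (SUP y. INF x. a x y)"
    using minimax by simp
  then obtain y0 where "ereal \<alpha> < (INF x. a x y0)"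
    by (auto simp: less_SUP_iff)
  then have bounded_below: "(INF x. a x y0) \<noteq> -\<infinity>"
    by auto
  have dom: "edom (\<lambda>x. a x y0) \<noteq> {}"
    using proper unfolding proper_lsc_def by auto
  have "\<exists>x0. x0 \<in> edom (\<lambda>x. a x y0) \<and> ZS \<epsilon> (\<lambda>x. a x y0) (\<lambda>x. a x y0) x0 x0" if "\<epsilon> > 0" for \<epsilon>
  proof -
    obtain x0 r where finite: "a x0 y0 = ereal r" and "\<And>x. a x0 y0 \<le> a x y0 + ereal \<epsilon>"
      using exists_eps_minimizer[OF bounded_below dom \<open>\<epsilon> > 0\<close>] by blast
    then have "ZS \<epsilon> (\<lambda>x. a x y0) (\<lambda>x. a x y0) x0 x0"
      by (intro ZS_if_zero_in_subdiff_lsc zero_in_subdiff_lsc_if_eps_minimal)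
    with finite show ?thesis
      unfolding edom_def by (intro exI[of _ x0]) simp
  qed
  then show "\<exists>y1 y2. \<forall>\<epsilon>>0. \<exists>x1 x2. x1 \<in> edom (\<lambda>x. a x y1) \<and> x2 \<in> edom (\<lambda>x. a x y2) \<and>
               ZS \<epsilon> (\<lambda>x. a x y1) (\<lambda>x. a x y2) x1 x2"
    by blast
qed

end
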